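(* Let $b\ge2$ be an integer and let $D$ be a nonempty subset of $\{-[\frac b2],-[\frac b2]+1,\ldots,b-1-[\frac b2]\}$. Let $(D_i)_{i\ge1}$ be a sequence with $D_i=D$ or $D_i=\{0\}$ for each $i$, and define $$\Lambda(b,D):=\bigcup_{k=1}^\infty\left\{\sum_{i=1}^k b^{i-1}d_i: d_i\in D_i\text{ for }1\le i\le k\right\}.$$ Then $$\dim_{Be}\Lambda(b,D)=\limsup_{n\to\infty}\frac{\#\{i:D_i=D,\ 1\le i\le n\}}{n}\cdot\frac{\log\#D}{\log b}.$$
   Context: $[x]$ is the integer part of $x$. For countable $\Lambda\subseteq\mathbb{R}^d$ and $r>0$, $D_r^+(\Lambda)=\limsup_{h\to\infty}\sup_{x\in\mathbb{R}^d}\#(\Lambda\cap B(x,h))/h^r$ ($B(x,h)$ the open ball), and the Beurling dimension is $\dim_{Be}(\Lambda)=\inf\{r:D_r^+(\Lambda)=0\}$. *)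

theory Defs
  imports "HOL-Analysis.Analysis" "HOL-Library.Extended_Real"
begin

definition npts :: "'a set \<Rightarrow> ereal" where
  "npts A = (if finite A then ereal (real (card A)) else \<infinity>)"

definition upper_beurling_density :: "real \<Rightarrow> ('a::euclidean_space) set \<Rightarrow> ereal" where
  "upper_beurling_density r \<Lambda> =
     Limsup at_top (\<lambda>h::real. SUP x\<in>(UNIV::'a set). npts (\<Lambda> \<inter> ball x h) / ereal (h powr r))"

definition beurling_dim :: "('a::euclidean_space) set \<Rightarrow> ereal" where
  "beurling_dim \<Lambda> = Inf {ereal r | r. r > 0 \<and> upper_beurling_density r \<Lambda> = 0}"

definition Lambda_set :: "int \<Rightarrow> (nat \<Rightarrow> int set) \<Rightarrow> real set" where
  "Lambda_set b Ds = (\<Union>k\<in>{1..}. {real_of_int (\<Sum>i=1..k. b ^ (i - 1) * d i) | d.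
       \<forall>i\<in>{1..k}. d i \<in> Ds i})"

end

theory Submission
  imports Defs
begin

(* Let m = #D and N(n) = #{i <= n. D_i = D}. Expansions with digits in a window of b
   consecutive integers are unique, so the sums of n digits are m^N(n) distinct points of
   Lambda in the ball B(0, b^n). Conversely, every point of Lambda is congruent mod b^n to a
   sum of at most n digits, and a ball of radius h <= b^n meets each residue class mod b^n in
   at most two points, so it contains at most 2 (n + 1) m^N(n) points of Lambda. Hence the
   counts at scale b^n grow like m^N(n) up to a polynomial factor, and the Beurling dimension
   is the exponential growth rate limsup log_b (m^N(n)) / n. *)

lemma abs_digit_sum_le:
  fixes b :: "'a::linordered_idom" and d :: "nat \<Rightarrow> 'a"
  assumes "b \<ge> 1" and "\<And>i. i \<in> {1..n} \<Longrightarrow> \<bar>d i\<bar> \<le> b - 1"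
  shows "\<bar>\<Sum>i=1..n. b^(i-1) * d i\<bar> \<le> b^n - 1"
  using assms(2)
proof (induction n)
  case (Suc n)
  have "\<bar>b^n * d (Suc n)\<bar> \<le> b^n * (b - 1)"
    using Suc.prems[of "Suc n"] assms(1) by (simp add: abs_mult mult_left_mono)
  moreover have "\<bar>\<Sum>i=1..n. b^(i-1) * d i\<bar> \<le> b^n - 1"
    using Suc by simp
  ultimately show ?case
    by (simp add: algebra_simps)
qed simp

lemma inj_on_digit_sum:
  fixes b lo :: int
  assumes "b \<ge> 1"
  shows "inj_on (\<lambda>d. \<Sum>i=1..n. b^(i-1) * d i) (PiE {1..n} (\<lambda>_. {lo..lo+b-1}))"
proof (induction n)
  case 0
  then show ?case
    by simp
next
  case (Suc n)
  show ?case
  proof (rule inj_onI)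
    fix d d'
    assume d: "d \<in> PiE {1..Suc n} (\<lambda>_. {lo..lo+b-1})"
      and d': "d' \<in> PiE {1..Suc n} (\<lambda>_. {lo..lo+b-1})"
      and eq: "(\<Sum>i=1..Suc n. b^(i-1) * d i) = (\<Sum>i=1..Suc n. b^(i-1) * d' i)"
    have "\<bar>\<Sum>i=1..n. b^(i-1) * (d i - d' i)\<bar> \<le> b^n - 1"
    proof (intro abs_digit_sum_le assms)
      fix i assume "i \<in> {1..n}"
      then have "d i \<in> {lo..lo+b-1}" "d' i \<in> {lo..lo+b-1}"
        using d d' by (auto simp: PiE_iff)
      then show "\<bar>d i - d' i\<bar> \<le> b - 1"
        by auto
    qed
    moreover have "(\<Sum>i=1..n. b^(i-1) * (d i - d' i)) = b^n * (d' (Suc n) - d (Suc n))"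
      using eq by (simp add: right_diff_distrib sum_subtractf algebra_simps)
    ultimately have "\<bar>d' (Suc n) - d (Suc n)\<bar> < 1"
      using assms by (simp add: abs_mult)
    then have last_digit: "d (Suc n) = d' (Suc n)"
      by simp
    with eq have "(\<Sum>i=1..n. b^(i-1) * restrict d {1..n} i) = (\<Sum>i=1..n. b^(i-1) * restrict d' {1..n} i)"
      by simp
    then have "restrict d {1..n} = restrict d' {1..n}"
      using d d' by (intro inj_onD[OF Suc.IH]) (auto simp: PiE_iff)
    then have "d i = d' i" if "i \<in> {1..n}" for i
      using that by (metis restrict_apply')
    with last_digit show "d = d'"
      by (intro PiE_ext[OF d d']) (auto simp: le_Suc_eq)
  qed
qed

definition digit_sums :: "int \<Rightarrow> (nat \<Rightarrow> int set) \<Rightarrow> nat \<Rightarrow> int set" where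
  "digit_sums b Ds k = (\<lambda>d. \<Sum>i=1..k. b^(i-1) * d i) ` PiE {1..k} Ds"

lemma Lambda_set_eq_Union_digit_sums:
  "Lambda_set b Ds = (\<Union>k\<in>{1..}. real_of_int ` digit_sums b Ds k)"
proof -
  have "{real_of_int (\<Sum>i=1..k. b^(i-1) * d i) | d. \<forall>i\<in>{1..k}. d i \<in> Ds i}
      = real_of_int ` digit_sums b Ds k" for k
  proof (intro equalityI subsetI)
    fix y assume "y \<in> {real_of_int (\<Sum>i=1..k. b^(i-1) * d i) | d. \<forall>i\<in>{1..k}. d i \<in> Ds i}"
    then obtain d where "\<forall>i\<in>{1..k}. d i \<in> Ds i" and y: "y = real_of_int (\<Sum>i=1..k. b^(i-1) * d i)"
      by blast
    then have "restrict d {1..k} \<in> PiE {1..k} Ds"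
      and "y = real_of_int (\<Sum>i=1..k. b^(i-1) * restrict d {1..k} i)"
      by auto
    then show "y \<in> real_of_int ` digit_sums b Ds k"
      unfolding digit_sums_def by blast
  qed (auto simp: digit_sums_def PiE_iff)
  then show ?thesis
    unfolding Lambda_set_def by simp
qed

lemma digit_sums_truncate:
  assumes "s \<in> digit_sums b Ds k"
  shows "\<exists>j\<le>n. \<exists>l\<in>digit_sums b Ds j. b^n dvd s - l"
proof -
  obtain d where d: "d \<in> PiE {1..k} Ds" and s: "s = (\<Sum>i=1..k. b^(i-1) * d i)"
    using assms unfolding digit_sums_def by blast
  define j where "j = min k n"
  define l where "l = (\<Sum>i=1..j. b^(i-1) * d i)"
  have "restrict d {1..j} \<in> PiE {1..j} Ds"
    using d by (auto simp: j_def PiE_iff)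
  moreover have "l = (\<Sum>i=1..j. b^(i-1) * restrict d {1..j} i)"
    by (simp add: l_def)
  ultimately have "l \<in> digit_sums b Ds j"
    unfolding digit_sums_def by blast
  moreover have "s - l = (\<Sum>i\<in>{1..k} - {1..j}. b^(i-1) * d i)"
    unfolding s l_def j_def by (subst sum.subset_diff[of "{1..min k n}"]) auto
  then have "b^n dvd s - l"
    by (auto simp: j_def intro!: dvd_sum dvd_mult2 le_imp_power_dvd)
  moreover have "j \<le> n"
    by (simp add: j_def)
  ultimately show ?thesis
    by blast
qed

lemma Lambda_set_ball_subset:
  fixes x h :: real
  assumes h: "h \<le> real_of_int b ^ n"
  shows "Lambda_set b Ds \<inter> ball x h \<subseteq> (\<Union>l\<in>(\<Union>j\<le>n. digit_sums b Ds j).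
    (\<lambda>t. real_of_int (l + b ^ n * t)) ` {t. \<bar>of_int b ^ n * of_int t - (x - of_int l)\<bar> < of_int b ^ n})"
proof
  fix y assume y: "y \<in> Lambda_set b Ds \<inter> ball x h"
  then obtain k s where "s \<in> digit_sums b Ds k" and ys: "y = of_int s"
    by (auto simp: Lambda_set_eq_Union_digit_sums)
  then obtain j l where "j \<le> n" "l \<in> digit_sums b Ds j" and "b ^ n dvd s - l"
    using digit_sums_truncate by blast
  then have l: "l \<in> (\<Union>j\<le>n. digit_sums b Ds j)"
    by blast
  obtain t where "s - l = b ^ n * t"
    using \<open>b ^ n dvd s - l\<close> by (rule dvdE)
  then have s: "s = l + b ^ n * t"
    by simp
  have "\<bar>of_int b ^ n * of_int t - (x - of_int l)\<bar> < real_of_int b ^ n"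
    using y h unfolding ys s by (auto simp: dist_real_def abs_minus_commute algebra_simps)
  with l s ys show "y \<in> (\<Union>l\<in>(\<Union>j\<le>n. digit_sums b Ds j).
    (\<lambda>t. real_of_int (l + b ^ n * t)) ` {t. \<bar>of_int b ^ n * of_int t - (x - of_int l)\<bar> < of_int b ^ n})"
    by blast
qed

lemma
  fixes B z :: real
  assumes "B > 0"
  shows finite_ints_near: "finite {t::int. \<bar>B * of_int t - z\<bar> < B}"
    and card_ints_near_le: "card {t::int. \<bar>B * of_int t - z\<bar> < B} \<le> 2"
proof -
  have sub: "{t::int. \<bar>B * of_int t - z\<bar> < B} \<subseteq> {\<lfloor>z / B\<rfloor>..\<lfloor>z / B\<rfloor>+1}"
  proof
    fix t assume "t \<in> {t::int. \<bar>B * of_int t - z\<bar> < B}"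
    moreover have "B * of_int t - z = B * (of_int t - z / B)"
      using assms by (simp add: field_simps)
    ultimately have "\<bar>of_int t - z / B\<bar> < 1"
      using assms by (simp add: abs_mult)
    then have "\<lfloor>z / B\<rfloor> < t + 1" "t - 1 \<le> \<lfloor>z / B\<rfloor>"
      by (auto simp: abs_less_iff floor_le_iff le_floor_iff)
    then show "t \<in> {\<lfloor>z / B\<rfloor>..\<lfloor>z / B\<rfloor>+1}"
      by simp
  qed
  then show "finite {t::int. \<bar>B * of_int t - z\<bar> < B}"
    by (rule finite_subset) simp
  from sub show "card {t::int. \<bar>B * of_int t - z\<bar> < B} \<le> 2"
    using card_mono[OF finite_atLeastAtMost_int sub] by simp
qed

lemma npts_finite: "finite A \<Longrightarrow> npts A = ereal (card A)"
  by (simp add: npts_def)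

lemma npts_nonneg: "0 \<le> npts A"
  by (simp add: npts_def)

lemma npts_mono: "A \<subseteq> B \<Longrightarrow> npts A \<le> npts B"
  by (auto simp: npts_def intro: card_mono dest: finite_subset)

lemma scale_exponent:
  fixes B h :: real
  assumes "B > 1" and "h \<ge> 1"
  defines "n \<equiv> nat \<lceil>log B h\<rceil>"
  shows "h \<le> B ^ n" and "B powr (real n - 1) < h"
proof -
  have "log B h \<ge> 0"
    using assms by simp
  then have n: "real n = of_int \<lceil>log B h\<rceil>"
    by (simp add: n_def)
  have "h = B powr log B h"
    using assms by simp
  also have "\<dots> \<le> B powr real n"
    using assms(1) n by (intro powr_mono) auto
  also have "\<dots> = B ^ n"
    using assms(1) by (simp add: powr_realpow)
  finally show "h \<le> B ^ n" .
  have "B powr (real n - 1) < B powr log B h"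
    using assms(1) n by (intro powr_less_mono) linarith+
  then show "B powr (real n - 1) < h"
    using assms(1,2) by simp
qed

lemma filterlim_scale_exponent:
  fixes B :: real
  assumes "B > 1"
  shows "filterlim (\<lambda>h. nat \<lceil>log B h\<rceil>) sequentially at_top"
  unfolding filterlim_at_top
proof
  fix N :: nat
  have "N \<le> nat \<lceil>log B h\<rceil>" if "h \<ge> B ^ N" for h
  proof -
    have "B ^ N > 0"
      using assms by simp
    with that have "h > 0"
      by linarith
    then have "real N \<le> log B h"
      using assms that by (simp add: le_log_iff powr_realpow)
    then show ?thesis
      by linarith
  qed
  then show "\<forall>\<^sub>F h in at_top. N \<le> nat \<lceil>log B h\<rceil>"
    unfolding eventually_at_top_linorder by blast
qed

lemma upper_beurling_density_eq_0I:
  fixes \<Lambda> :: "'a::euclidean_space set" and G :: "nat \<Rightarrow> real" and B r :: real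
  assumes B: "B > 1" and r: "r > 0"
    and count: "\<And>x h n. h \<le> B ^ n \<Longrightarrow> npts (\<Lambda> \<inter> ball x h) \<le> ereal (G n)"
    and lim: "(\<lambda>n. G n / B powr (r * real n)) \<longlonglongrightarrow> 0"
  shows "upper_beurling_density r \<Lambda> = 0"
proof -
  define f where "f h = (SUP x. npts (\<Lambda> \<inter> ball x h) / ereal (h powr r))" for h
  define k where "k h = nat \<lceil>log B h\<rceil>" for h
  define g where "g h = ereal (B powr r * (G (k h) / B powr (r * real (k h))))" for h
  have "f h \<le> g h" if h: "h \<ge> 1" for h
    unfolding f_def
  proof (rule SUP_least)
    fix x
    define n where "n = k h"
    have hn: "h \<le> B ^ n" and hn': "B powr (real n - 1) < h"
      using scale_exponent[OF B h] by (simp_all add: n_def k_def)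
    have Gn: "0 \<le> G n"
      using order_trans[OF npts_nonneg count[OF hn]] by simp
    have "B powr (r * real n) / B powr r = B powr ((real n - 1) * r)"
      by (simp add: powr_diff algebra_simps)
    also have "\<dots> \<le> h powr r"
      using B r hn' by (simp add: powr_powr[symmetric] powr_mono2)
    finally have "G n / h powr r \<le> G n / (B powr (r * real n) / B powr r)"
      using B Gn h by (intro divide_left_mono) auto
    also have "\<dots> = B powr r * (G n / B powr (r * real n))"
      by simp
    finally have Gh: "G n / h powr r \<le> B powr r * (G n / B powr (r * real n))" .
    have "npts (\<Lambda> \<inter> ball x h) / ereal (h powr r) \<le> ereal (G n) / ereal (h powr r)"
      using count[OF hn] h by (intro ereal_divide_right_mono) auto
    also have "\<dots> = ereal (G n / h powr r)"
      using h by simp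
    also have "\<dots> \<le> g h"
      using Gh by (simp add: g_def n_def)
    finally show "npts (\<Lambda> \<inter> ball x h) / ereal (h powr r) \<le> g h" .
  qed
  then have "Limsup at_top f \<le> Limsup at_top g"
    by (intro Limsup_mono eventually_at_top_linorderI)
  moreover have "(g \<longlongrightarrow> 0) at_top"
    unfolding g_def k_def zero_ereal_def
    by (intro tendsto_ereal filterlim_compose[OF tendsto_mult_right_zero[OF lim]]
        filterlim_scale_exponent B)
  then have "Limsup at_top g = 0"
    by (intro lim_imp_Limsup) simp_all
  moreover have "0 \<le> Limsup at_top f"
    unfolding f_def
    by (intro le_Limsup always_eventually allI SUP_upper2[OF UNIV_I]
        zero_le_divide_ereal npts_nonneg) simp_all
  ultimately show ?thesis
    unfolding upper_beurling_density_def f_def by simp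
qed

lemma one_le_upper_beurling_density:
  fixes \<Lambda> :: "'a::euclidean_space set" and F :: "nat \<Rightarrow> real" and B r :: real and x\<^sub>0 :: 'a
  assumes B: "B > 1"
    and count: "\<And>n. n \<ge> 1 \<Longrightarrow> ereal (F n) \<le> npts (\<Lambda> \<inter> ball x\<^sub>0 (B ^ n))"
    and freq: "\<exists>\<^sub>F n in sequentially. B powr (r * real n) < F n"
  shows "1 \<le> upper_beurling_density r \<Lambda>"
proof (rule ccontr)
  define f where "f h = (SUP x. npts (\<Lambda> \<inter> ball x h) / ereal (h powr r))" for h
  assume "\<not> 1 \<le> upper_beurling_density r \<Lambda>"
  then have "\<forall>\<^sub>F h in at_top. f h < 1"
    by (intro Limsup_lessD) (simp add: upper_beurling_density_def f_def)
  moreover have "filterlim (\<lambda>n. B ^ n) at_top sequentially"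
    using B by (intro filterlim_at_infinity_imp_filterlim_at_top filterlim_realpow_sequentially_gt1) auto
  ultimately have "\<forall>\<^sub>F n in sequentially. f (B ^ n) < 1"
    by (rule eventually_compose_filterlim)
  moreover have "1 \<le> f (B ^ n)" if "n \<ge> 1" and n: "B powr (r * real n) < F n" for n
  proof -
    have "(B ^ n) powr r = B powr (r * real n)"
      using B by (simp add: powr_realpow[symmetric] powr_powr mult.commute)
    then have "1 \<le> ereal (F n) / ereal ((B ^ n) powr r)"
      using n B by simp
    also have "\<dots> \<le> npts (\<Lambda> \<inter> ball x\<^sub>0 (B ^ n)) / ereal ((B ^ n) powr r)"
      using count[OF that(1)] B by (intro ereal_divide_right_mono) auto
    also have "\<dots> \<le> f (B ^ n)"
      unfolding f_def by (rule SUP_upper) simp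
    finally show ?thesis .
  qed
  then have "\<exists>\<^sub>F n in sequentially. 1 \<le> f (B ^ n)"
    using frequently_eventually_frequently[OF freq eventually_ge_at_top[of 1]]
    by (auto elim!: frequently_elim1)
  ultimately show False
    by (simp add: frequently_def not_le)
qed

lemma slower_exponential_growth_tendsto_0:
  fixes B c r :: real and F :: "nat \<Rightarrow> real"
  assumes B: "B > 1" and "c < r" and F: "\<And>n. F n \<ge> 0"
    and growth: "\<forall>\<^sub>F n in sequentially. F n \<le> B powr (c * real n)"
  shows "(\<lambda>n. (real n + 1) * F n / B powr (r * real n)) \<longlonglongrightarrow> 0"
proof -
  define q where "q = B powr (c - r)"
  have q: "0 < q" "q < 1"
    using B \<open>c < r\<close> by (auto simp: q_def powr_less_one)
  have qn: "B powr (c * real n) / B powr (r * real n) = q ^ n" for n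
    using B by (simp add: q_def powr_realpow[symmetric] powr_powr powr_diff[symmetric] algebra_simps)
  show ?thesis
  proof (rule tendsto_sandwich[of "\<lambda>_. 0" _ _ "\<lambda>n. real n * q ^ n + q ^ n"])
    show "\<forall>\<^sub>F n in sequentially. (real n + 1) * F n / B powr (r * real n) \<le> real n * q ^ n + q ^ n"
      using growth
    proof eventually_elim
      case (elim n)
      have "(real n + 1) * F n / B powr (r * real n) = (real n + 1) * (F n / B powr (r * real n))"
        by simp
      also have "\<dots> \<le> (real n + 1) * (B powr (c * real n) / B powr (r * real n))"
        using elim by (intro mult_left_mono divide_right_mono) auto
      also have "\<dots> = real n * q ^ n + q ^ n"
        by (simp add: qn algebra_simps)
      finally show ?case .
    qed
    show "(\<lambda>n. real n * q ^ n + q ^ n) \<longlonglongrightarrow> 0"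
      using q tendsto_add[OF powser_times_n_limit_0[of q] LIMSEQ_power_zero[of q]] by simp
  qed (use F in simp_all)
qed

lemma limsup_log_growth_le_if_density_eq_0:
  fixes \<Lambda> :: "'a::euclidean_space set" and F :: "nat \<Rightarrow> real" and B r :: real and x\<^sub>0 :: 'a
  assumes B: "B > 1" and F: "\<And>n. F n > 0" and r: "r > 0"
    and lower: "\<And>n. n \<ge> 1 \<Longrightarrow> ereal (F n) \<le> npts (\<Lambda> \<inter> ball x\<^sub>0 (B ^ n))"
    and dens: "upper_beurling_density r \<Lambda> = 0"
  shows "limsup (\<lambda>n. ereal (log B (F n) / real n)) \<le> ereal r"
proof (rule ccontr)
  assume not_le: "\<not> limsup (\<lambda>n. ereal (log B (F n) / real n)) \<le> ereal r"
  have "\<not> (\<forall>\<^sub>F n in sequentially. ereal (log B (F n) / real n) \<le> ereal r)"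
  proof
    assume "\<forall>\<^sub>F n in sequentially. ereal (log B (F n) / real n) \<le> ereal r"
    then have "limsup (\<lambda>n. ereal (log B (F n) / real n)) \<le> ereal r"
      by (rule Limsup_bounded)
    with not_le show False ..
  qed
  then have "\<exists>\<^sub>F n in sequentially. r < log B (F n) / real n"
    by (auto simp: not_eventually not_le elim!: frequently_elim1)
  then have "\<exists>\<^sub>F n in sequentially. B powr (r * real n) < F n"
  proof (rule frequently_elim1)
    fix n assume n: "r < log B (F n) / real n"
    with r have "n > 0"
      by (cases "n = 0") auto
    with n have "r * real n < log B (F n)"
      by (simp add: field_simps)
    then show "B powr (r * real n) < F n"
      using B F[of n] by (simp add: less_log_iff)
  qed
  then have "1 \<le> upper_beurling_density r \<Lambda>"
    using one_le_upper_beurling_density[OF B lower] by simp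
  with dens show False
    by simp
qed

lemma upper_beurling_density_eq_0_if_limsup_log_growth_less:
  fixes \<Lambda> :: "'a::euclidean_space set" and F :: "nat \<Rightarrow> real" and B C r :: real
  assumes B: "B > 1" and F: "\<And>n. F n > 0" and r: "r > 0"
    and upper: "\<And>x h n. h \<le> B ^ n \<Longrightarrow> npts (\<Lambda> \<inter> ball x h) \<le> ereal (C * ((real n + 1) * F n))"
    and less: "limsup (\<lambda>n. ereal (log B (F n) / real n)) < ereal r"
  shows "upper_beurling_density r \<Lambda> = 0"
proof -
  obtain c where c: "limsup (\<lambda>n. ereal (log B (F n) / real n)) < ereal c" and "c < r"
    using ereal_dense2[OF less] by auto
  have "\<forall>\<^sub>F n in sequentially. ereal (log B (F n) / real n) < ereal c"
    using c by (rule Limsup_lessD)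
  then have "\<forall>\<^sub>F n in sequentially. F n \<le> B powr (c * real n)"
    using eventually_gt_at_top[of 0]
  proof eventually_elim
    case (elim n)
    then have "log B (F n) \<le> c * real n"
      by (simp add: field_simps)
    then show ?case
      using B F[of n] by (simp add: log_le_iff)
  qed
  then have "(\<lambda>n. C * ((real n + 1) * F n / B powr (r * real n))) \<longlonglongrightarrow> 0"
    using B \<open>c < r\<close> less_imp_le[OF F]
    by (intro tendsto_mult_right_zero slower_exponential_growth_tendsto_0)
  then show ?thesis
    using B r upper by (intro upper_beurling_density_eq_0I) simp_all
qed

theorem beurling_dim_eq_limsup_log_growth:
  fixes \<Lambda> :: "'a::euclidean_space set" and F :: "nat \<Rightarrow> real" and B C :: real and x\<^sub>0 :: 'a
  assumes B: "B > 1" and F: "\<And>n. F n \<ge> 1"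
    and upper: "\<And>x h n. h \<le> B ^ n \<Longrightarrow> npts (\<Lambda> \<inter> ball x h) \<le> ereal (C * ((real n + 1) * F n))"
    and lower: "\<And>n. n \<ge> 1 \<Longrightarrow> ereal (F n) \<le> npts (\<Lambda> \<inter> ball x\<^sub>0 (B ^ n))"
  shows "beurling_dim \<Lambda> = limsup (\<lambda>n. ereal (log B (F n) / real n))"
proof -
  define L where "L = limsup (\<lambda>n. ereal (log B (F n) / real n))"
  define A where "A = {ereal r | r. r > 0 \<and> upper_beurling_density r \<Lambda> = 0}"
  have F_pos: "F n > 0" for n
    using F[of n] by simp
  have "L \<le> Inf A"
    unfolding L_def A_def
    by (rule Inf_greatest) (auto intro: limsup_log_growth_le_if_density_eq_0[OF B F_pos _ lower])
  moreover have "Inf A \<le> L"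
  proof (rule dense_ge)
    fix y assume "L < y"
    have "0 \<le> log B (F n) / real n" for n
      using B F[of n] by simp
    then have "0 \<le> L"
      unfolding L_def by (intro le_Limsup always_eventually allI) simp_all
    show "Inf A \<le> y"
    proof (cases y)
      case (real r)
      with \<open>0 \<le> L\<close> \<open>L < y\<close> have "r > 0"
        using le_less_trans by fastforce
      with \<open>L < y\<close> real have "ereal r \<in> A"
        unfolding L_def A_def
        using upper_beurling_density_eq_0_if_limsup_log_growth_less[OF B F_pos _ upper] by auto
      with real show ?thesis
        by (simp add: Inf_lower)
    qed (use \<open>L < y\<close> in simp_all)
  qed
  ultimately show ?thesis
    unfolding beurling_dim_def A_def L_def by simp
qed

locale digit_sequence =
  fixes b :: int and D :: "int set" and Ds :: "nat \<Rightarrow> int set"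
  assumes b: "b \<ge> 2" and D_nonempty: "D \<noteq> {}"
    and D_window: "D \<subseteq> {- (b div 2) .. b - 1 - (b div 2)}"
    and Ds: "\<And>i. i \<ge> 1 \<Longrightarrow> Ds i = D \<or> Ds i = {0}"
begin

lemma Ds_window: "i \<ge> 1 \<Longrightarrow> Ds i \<subseteq> {- (b div 2) .. - (b div 2) + b - 1}"
  using Ds[of i] D_window b by auto

lemma finite_Ds: "i \<ge> 1 \<Longrightarrow> finite (Ds i)"
  using Ds_window finite_atLeastAtMost_int by (rule finite_subset)

lemma abs_le_of_mem_Ds: "i \<ge> 1 \<Longrightarrow> x \<in> Ds i \<Longrightarrow> \<bar>x\<bar> \<le> b - 1"
  using Ds_window b by fastforce

lemma prod_card_Ds: "(\<Prod>i=1..n. card (Ds i)) = card D ^ card {i \<in> {1..n}. Ds i = D}"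
proof -
  have "(\<Prod>i=1..n. card (Ds i)) = (\<Prod>i=1..n. if Ds i = D then card D else 1)"
    using Ds by (intro prod.cong) fastforce+
  also have "\<dots> = card D ^ card ({1..n} \<inter> {i. Ds i = D})"
    by (simp add: prod.If_cases)
  also have "{1..n} \<inter> {i. Ds i = D} = {i \<in> {1..n}. Ds i = D}"
    by blast
  finally show ?thesis .
qed

lemma card_digit_sums: "card (digit_sums b Ds n) = card D ^ card {i \<in> {1..n}. Ds i = D}"
proof -
  have "inj_on (\<lambda>d. \<Sum>i=1..n. b^(i-1) * d i) (PiE {1..n} Ds)"
    using Ds_window b by (intro inj_on_subset[OF inj_on_digit_sum[where lo = "- (b div 2)"]] PiE_mono) auto
  then have "card (digit_sums b Ds n) = card (PiE {1..n} Ds)"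
    unfolding digit_sums_def by (rule card_image)
  then show ?thesis
    by (simp only: card_PiE[OF finite_atLeastAtMost] prod_card_Ds)
qed

lemma abs_less_of_mem_digit_sums:
  assumes "s \<in> digit_sums b Ds n"
  shows "\<bar>s\<bar> < b ^ n"
proof -
  obtain d where d: "d \<in> PiE {1..n} Ds" and s: "s = (\<Sum>i=1..n. b^(i-1) * d i)"
    using assms unfolding digit_sums_def by blast
  have "\<bar>s\<bar> \<le> b ^ n - 1"
    unfolding s
  proof (rule abs_digit_sum_le)
    show "b \<ge> 1"
      using b by simp
    fix i assume "i \<in> {1..n}"
    with d show "\<bar>d i\<bar> \<le> b - 1"
      by (intro abs_le_of_mem_Ds) (auto simp: PiE_iff)
  qed
  then show ?thesis
    by simp
qed

lemma card_D_pos: "card D > 0"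
  using D_nonempty D_window finite_atLeastAtMost_int finite_subset by (auto simp: card_gt_0_iff)

lemma finite_digit_sums: "finite (digit_sums b Ds k)"
  unfolding digit_sums_def using finite_Ds by (intro finite_imageI finite_PiE) auto

lemma card_UN_digit_sums_le:
  "card (\<Union>j\<le>n. digit_sums b Ds j) \<le> (n + 1) * card D ^ card {i \<in> {1..n}. Ds i = D}"
proof -
  have "card (\<Union>j\<le>n. digit_sums b Ds j) \<le> (\<Sum>j\<le>n. card (digit_sums b Ds j))"
    by (rule card_UN_le) simp
  also have "\<dots> \<le> (\<Sum>j\<le>n. card D ^ card {i \<in> {1..n}. Ds i = D})"
    unfolding card_digit_sums
    using card_D_pos by (intro sum_mono power_increasing card_mono) auto
  also have "\<dots> = (n + 1) * card D ^ card {i \<in> {1..n}. Ds i = D}"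
    by simp
  finally show ?thesis .
qed

lemma npts_ball_le:
  fixes x h :: real
  assumes h: "h \<le> real_of_int b ^ n"
  shows "npts (Lambda_set b Ds \<inter> ball x h)
    \<le> ereal (2 * ((real n + 1) * real (card D) ^ card {i \<in> {1..n}. Ds i = D}))"
proof -
  define R where "R = (\<Union>j\<le>n. digit_sums b Ds j)"
  define T where "T l = {t::int. \<bar>of_int b ^ n * of_int t - (x - of_int l)\<bar> < of_int b ^ n}" for l
  define U where "U = (\<Union>l\<in>R. (\<lambda>t. real_of_int (l + b ^ n * t)) ` T l)"
  have B: "real_of_int b ^ n > 0"
    using b by simp
  have "finite R"
    unfolding R_def using finite_digit_sums by blast
  then have "finite U"
    unfolding U_def T_def using finite_ints_near[OF B] by blast
  have "card U \<le> (\<Sum>l\<in>R. card (T l))"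
    unfolding U_def T_def using \<open>finite R\<close> finite_ints_near[OF B]
    by (intro order_trans[OF card_UN_le sum_mono] card_image_le)
  also have "\<dots> \<le> card R * 2"
    using sum_bounded_above[of R "\<lambda>l. card (T l)" 2] card_ints_near_le[OF B]
    unfolding T_def by simp
  also have "\<dots> \<le> 2 * ((n + 1) * card D ^ card {i \<in> {1..n}. Ds i = D})"
    unfolding R_def using card_UN_digit_sums_le[of n] by simp
  finally have "real (card U) \<le> real (2 * ((n + 1) * card D ^ card {i \<in> {1..n}. Ds i = D}))"
    by (simp only: of_nat_le_iff)
  then have card_U: "real (card U) \<le> 2 * ((real n + 1) * real (card D) ^ card {i \<in> {1..n}. Ds i = D})"
    by (simp add: algebra_simps)
  have "Lambda_set b Ds \<inter> ball x h \<subseteq> U"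
    unfolding U_def R_def T_def using h by (rule Lambda_set_ball_subset)
  then have "npts (Lambda_set b Ds \<inter> ball x h) \<le> npts U"
    by (rule npts_mono)
  also have "\<dots> = ereal (card U)"
    using \<open>finite U\<close> by (rule npts_finite)
  also have "\<dots> \<le> ereal (2 * ((real n + 1) * real (card D) ^ card {i \<in> {1..n}. Ds i = D}))"
    using card_U by simp
  finally show ?thesis .
qed

lemma npts_ball_ge:
  assumes "n \<ge> 1"
  shows "ereal (real (card D) ^ card {i \<in> {1..n}. Ds i = D})
    \<le> npts (Lambda_set b Ds \<inter> ball 0 (real_of_int b ^ n))"
proof -
  have "real_of_int ` digit_sums b Ds n \<subseteq> Lambda_set b Ds \<inter> ball 0 (real_of_int b ^ n)"
  proof
    fix y assume "y \<in> real_of_int ` digit_sums b Ds n"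
    then obtain s where s: "s \<in> digit_sums b Ds n" and y: "y = of_int s"
      by blast
    have "\<bar>real_of_int s\<bar> < real_of_int b ^ n"
      using abs_less_of_mem_digit_sums[OF s] by (simp flip: of_int_abs of_int_power of_int_less_iff)
    with s y assms show "y \<in> Lambda_set b Ds \<inter> ball 0 (real_of_int b ^ n)"
      by (auto simp: Lambda_set_eq_Union_digit_sums)
  qed
  then have "npts (real_of_int ` digit_sums b Ds n) \<le> npts (Lambda_set b Ds \<inter> ball 0 (real_of_int b ^ n))"
    by (rule npts_mono)
  moreover have "npts (real_of_int ` digit_sums b Ds n) = ereal (real (card D) ^ card {i \<in> {1..n}. Ds i = D})"
    using finite_digit_sums by (simp add: npts_finite card_image inj_on_def card_digit_sums)
  ultimately show ?thesis
    by simp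
qed

end

theorem lemma5p2:
  fixes b :: int and D :: "int set" and Ds :: "nat \<Rightarrow> int set"
  assumes "b \<ge> 2"
    and "D \<noteq> {}"
    and "D \<subseteq> {- (b div 2) .. b - 1 - (b div 2)}"
    and "\<And>i. i \<ge> 1 \<Longrightarrow> Ds i = D \<or> Ds i = {0}"
  shows "beurling_dim (Lambda_set b Ds) =
     limsup (\<lambda>n. ereal (real (card {i \<in> {1..n}. Ds i = D}) / real n))
       * ereal (ln (real (card D)) / ln (real_of_int b))"
proof -
  interpret digit_sequence b D Ds
    using assms by unfold_locales
  define N where "N n = card {i \<in> {1..n}. Ds i = D}" for n
  have "beurling_dim (Lambda_set b Ds) = limsup (\<lambda>n. ereal (log b (real (card D) ^ N n) / real n))"
    unfolding N_def using b card_D_pos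
    by (intro beurling_dim_eq_limsup_log_growth[OF _ _ npts_ball_le npts_ball_ge]) simp_all
  also have "\<dots> = limsup (\<lambda>n. ereal (real (N n) / real n) * ereal (log b (card D)))"
    using card_D_pos by (simp add: log_nat_power)
  also have "\<dots> = limsup (\<lambda>n. ereal (real (N n) / real n)) * ereal (log b (card D))"
    using b card_D_pos by (intro limsup_ereal_mult_right) simp
  finally show ?thesis
    by (simp add: N_def log_def)
qed

end
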